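(* Let $a,b$ be integers with $0<b<a$, let $S=\langle a,a+1,\ldots,a+b\rangle$ with conductor $c$, and let $m\ge 2c-1$. If $M$ is an $(S,m,r)$-amenable set, then $M+1=\{x+1\mid x\in M\}$ is an $(S,m+1,r)$-amenable set.
   Context: For $x\in S$, $\mathrm D(x)=\{\alpha\in S\mid x-\alpha\in S\}$. The conductor $c$ is the least element of $S$ with $c+n\in S$ for all $n\in\mathbb N$. For $m\ge 2c-1$, a set $M=\{m_1<\cdots<m_r\}\subseteq S$ with $m=m_1$ is $(S,m,r)$-amenable if $\mathrm D(m_i)\cap[m,\infty)\subseteq M$ for all $i$. *)

theory Defs
  imports Main
begin

inductive_set semigroup_gen :: "nat set \<Rightarrow> nat set" for G :: "nat set" where
  zero: "0 \<in> semigroup_gen G"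
| add: "x \<in> semigroup_gen G \<Longrightarrow> g \<in> G \<Longrightarrow> x + g \<in> semigroup_gen G"

definition conductor :: "nat set \<Rightarrow> nat" where
  "conductor S = (LEAST c. c \<in> S \<and> (\<forall>n. c + n \<in> S))"

text \<open>D(x) = {alpha in S | x - alpha in S} (difference taken in the integers).\<close>
definition Dset :: "nat set \<Rightarrow> nat \<Rightarrow> nat set" where
  "Dset S x = {\<alpha> \<in> S. \<alpha> \<le> x \<and> x - \<alpha> \<in> S}"

definition amenable :: "nat set \<Rightarrow> nat \<Rightarrow> nat \<Rightarrow> nat set \<Rightarrow> bool" where
  "amenable S m r M \<longleftrightarrow>
     2 * conductor S - 1 \<le> m \<and> finite M \<and> card M = r \<and> M \<subseteq> S \<and>
     m \<in> M \<and> (\<forall>x\<in>M. m \<le> x) \<and>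
     (\<forall>x\<in>M. Dset S x \<inter> {m..} \<subseteq> M)"

end

theory Submission
  imports Defs
begin

text \<open>Every integer from the conductor on lies in \<open>S\<close>, and \<open>m \<ge> 2c - 1 \<ge> c\<close>; so every
  \<open>\<alpha> \<ge> m + 1\<close> has \<open>\<alpha> - 1 \<in> S\<close>, and \<open>\<alpha> \<in> D(x + 1)\<close> forces \<open>\<alpha> - 1 \<in> D(x)\<close>. Thus the
  amenability of \<open>M\<close> transfers to \<open>M + 1\<close>.\<close>

lemma semigroup_gen_interval_mem:
  fixes a b k j :: nat
  assumes "j \<le> k * b"
  shows "k * a + j \<in> semigroup_gen {a..a+b}"
  using assms
proof (induction k arbitrary: j)
  case 0
  then show ?case by (simp add: semigroup_gen.zero)
next
  case (Suc k)
  define j' where "j' = min j (k * b)"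
  have "k * a + j' \<in> semigroup_gen {a..a+b}" using Suc.IH j'_def by simp
  moreover have "a + (j - j') \<in> {a..a+b}" using Suc.prems j'_def by auto
  ultimately have "k * a + j' + (a + (j - j')) \<in> semigroup_gen {a..a+b}"
    by (rule semigroup_gen.add)
  moreover have "k * a + j' + (a + (j - j')) = Suc k * a + j" using j'_def by auto
  ultimately show ?case by simp
qed

lemma semigroup_gen_interval_ge_square:
  fixes a b n :: nat
  assumes "0 < b" and "a * a \<le> n"
  shows "n \<in> semigroup_gen {a..a+b}"
proof (cases "a = 0")
  case True
  then show ?thesis using semigroup_gen_interval_mem[of n n b 0] assms(1) by simp
next
  case False
  have "a * a div a \<le> n div a" using assms(2) by (rule div_le_mono)
  then have "a \<le> n div a" using False by simp
  moreover have "n mod a < a" using False by simp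
  moreover have "n div a \<le> (n div a) * b" using assms(1) by simp
  ultimately have "n mod a \<le> (n div a) * b" by linarith
  then have "(n div a) * a + n mod a \<in> semigroup_gen {a..a+b}"
    by (rule semigroup_gen_interval_mem)
  then show ?thesis by simp
qed

lemma ge_conductor_mem:
  assumes "conductor S \<le> n" and "c \<in> S" and "\<And>k. c + k \<in> S"
  shows "n \<in> S"
proof -
  have "conductor S \<in> S \<and> (\<forall>k. conductor S + k \<in> S)"
    unfolding conductor_def by (rule LeastI[of _ c]) (use assms(2,3) in blast)
  then have "conductor S + (n - conductor S) \<in> S" by blast
  then show ?thesis using assms(1) by simp
qed

lemma amenable_shift:
  assumes mem_S: "\<And>n. m \<le> n \<Longrightarrow> n \<in> S" and "amenable S m r M"
  shows "amenable S (m + 1) r ((\<lambda>x. x + 1) ` M)"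
proof -
  from assms(2) have "finite M" and "card M = r" and "m \<in> M"
    and above: "\<forall>x\<in>M. m \<le> x" and closed: "\<forall>x\<in>M. Dset S x \<inter> {m..} \<subseteq> M"
    and "2 * conductor S - 1 \<le> m"
    unfolding amenable_def by auto
  have "card ((\<lambda>x. x + 1) ` M) = r" using \<open>card M = r\<close> by (simp add: card_image)
  moreover have "(\<lambda>x. x + 1) ` M \<subseteq> S" using above mem_S by auto
  moreover have "Dset S (x + 1) \<inter> {m + 1..} \<subseteq> (\<lambda>x. x + 1) ` M" if "x \<in> M" for x
  proof
    fix \<alpha> assume \<alpha>: "\<alpha> \<in> Dset S (x + 1) \<inter> {m + 1..}"
    then have "\<alpha> - 1 \<in> Dset S x \<inter> {m..}"
      using mem_S[of "\<alpha> - 1"] by (auto simp: Dset_def Suc_diff_le)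
    then have "\<alpha> - 1 \<in> M" using closed \<open>x \<in> M\<close> by blast
    moreover have "\<alpha> = (\<alpha> - 1) + 1" using \<alpha> by auto
    ultimately show "\<alpha> \<in> (\<lambda>x. x + 1) ` M" by blast
  qed
  ultimately show ?thesis
    using \<open>finite M\<close> \<open>m \<in> M\<close> above \<open>2 * conductor S - 1 \<le> m\<close>
    unfolding amenable_def by auto
qed

theorem lemma4p20:
  fixes a b m r :: nat and M :: "nat set"
  assumes "0 < b" and "b < a"
    and "2 * conductor (semigroup_gen {a..a+b}) - 1 \<le> m"
    and "amenable (semigroup_gen {a..a+b}) m r M"
  shows "amenable (semigroup_gen {a..a+b}) (m + 1) r ((\<lambda>x. x + 1) ` M)"
proof (rule amenable_shift[OF _ assms(4)])
  fix n assume "m \<le> n"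
  then have "conductor (semigroup_gen {a..a+b}) \<le> n" using assms(3) by linarith
  then show "n \<in> semigroup_gen {a..a+b}"
  proof (rule ge_conductor_mem)
    show "a * a \<in> semigroup_gen {a..a+b}" "\<And>k. a * a + k \<in> semigroup_gen {a..a+b}"
      using semigroup_gen_interval_ge_square[OF assms(1)] by simp_all
  qed
qed

end
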